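(* Let $(L,\le,\bot,\top)$ be a complete lattice and $(\&_i,\swarrow^i,\nwarrow_i)$, $i=1,\dots,n$, adjoint triples on $L$ with $x\,\&_i\,\top=\top\,\&_i\,x=x$ for all $x\in L$ and all $i$. Let $(A,B,R,\sigma)$ be a normalized context whose concept lattice $\mathcal{M}$ satisfies the ascending chain condition. Then the following are equivalent: (i) $(A,B,R,\sigma)$ has a decomposition into independent subcontexts; (ii) $\mathcal{M}$ has a decomposition into independent blocks.
   Context: An adjoint triple on $L$ is a triple of maps $\&,\swarrow,\nwarrow\colon L\times L\to L$ with $x\le z\swarrow y\iff x\& y\le z\iff y\le z\nwarrow x$. A context is $(A,B,R,\sigma)$ with $A,B$ non-empty, $R\colon A\times B\to L$, $\sigma\colon A\times B\to\{1,\dots,n\}$; normalized means every $a\in A$ has $b_1,b_2$ with $R(a,b_1)\ne\bot$, $R(a,b_2)=\bot$, and every $b\in B$ has $a_1,a_2$ with $R(a_1,b)\ne\bot$, $R(a_2,b)=\bot$. For $g\colon B\to L$, $f\colon A\to L$: $g^\uparrow(a)=\inf_{b}R(a,b)\swarrow^{\sigma(a,b)}g(b)$, $f^\downarrow(b)=\inf_{a}R(a,b)\nwarrow_{\sigma(a,b)}f(a)$. $\mathcal{M}$ is the complete lattice of pairs $\langle g,f\rangle$ with $g^\uparrow=f$, $f^\downarrow=g$, ordered by $g_1\le g_2$ pointwise. For a bounded lattice $(M,\preceq,\bot,\top)$, a block is a sublattice $K\subsetneq M$ with $K\setminus\{\bot,\top\}\ne\varnothing$ and $(\{x\mid k\preceq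 x\}\cup\{x\mid x\preceq k\})\setminus\{\bot,\top\}\subseteq K$ for all $k\in K\setminus\{\bot,\top\}$; blocks $K_1,K_2$ are independent if $K_1\cap K_2\subseteq\{\bot,\top\}$; a decomposition into independent blocks is a family of pairwise independent blocks whose union is $M$. A separable subcontext is a tuple $(Y,X,R_{Y\times X},\sigma_{Y\times X})$ (restrictions of $R,\sigma$) with $Y\subsetneq A$, $X\subsetneq B$ non-empty, $R(a,b)\neq\bot$ for some $a\in Y,b\in X$, $R=\bot$ on $Y\times(B\setminus X)$ and on $(A\setminus Y)\times X$. $\&$ has zero-divisors if $x\&y=\bot$ for some $x,y\neq\bot$. A decomposition into independent subcontexts is a family $\{(A_\lambda,B_\lambda,R_\lambda,\sigma_\lambda)\}_{\lambda\in\Lambda}$, $\Lambda\ne\varnothing$, $R_\lambda,\sigma_\lambda$ restrictions to $A_\lambda\times B_\lambda$, such that each tuple is a separable subcontext, the $A_\lambda$ are pairwise disjoint with union $A$, the $B_\lambda$ are pairwise disjoint with union $B$, and for each $\lambda$ the conjunctor $\&_{\sigma(a,b)}$ has no zero-divisors for all $(a,b)\in((A\setminus A_\lambda)\times B_\lambda)\cup(A_\lambda\times(B\setminus B_\lambda))$. *)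

theory Defs
  imports Main
begin

definition adjoint_triple ::
  "('l::complete_lattice \<Rightarrow> 'l \<Rightarrow> 'l) \<Rightarrow> ('l \<Rightarrow> 'l \<Rightarrow> 'l) \<Rightarrow> ('l \<Rightarrow> 'l \<Rightarrow> 'l) \<Rightarrow> bool" where
  "adjoint_triple cj ld rd \<longleftrightarrow>
     (\<forall>x y z. (x \<le> ld z y \<longleftrightarrow> cj x y \<le> z) \<and> (cj x y \<le> z \<longleftrightarrow> y \<le> rd z x))"

definition has_zero_divisors :: "('l::complete_lattice \<Rightarrow> 'l \<Rightarrow> 'l) \<Rightarrow> bool" where
  "has_zero_divisors cj \<longleftrightarrow> (\<exists>x y. x \<noteq> bot \<and> y \<noteq> bot \<and> cj x y = bot)"

definition normalized_context ::
  "'a set \<Rightarrow> 'b set \<Rightarrow> ('a \<Rightarrow> 'b \<Rightarrow> 'l::complete_lattice) \<Rightarrow> bool" where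
  "normalized_context A B R \<longleftrightarrow>
     (\<forall>a\<in>A. (\<exists>b1\<in>B. R a b1 \<noteq> bot) \<and> (\<exists>b2\<in>B. R a b2 = bot)) \<and>
     (\<forall>b\<in>B. (\<exists>a1\<in>A. R a1 b \<noteq> bot) \<and> (\<exists>a2\<in>A. R a2 b = bot))"

text \<open>Derivation operators; ld i = the i-th left residuum (swarrow^i), rd i = nwarrow_i.\<close>

definition up_op ::
  "'a set \<Rightarrow> 'b set \<Rightarrow> ('a \<Rightarrow> 'b \<Rightarrow> 'l::complete_lattice) \<Rightarrow> ('a \<Rightarrow> 'b \<Rightarrow> nat)
    \<Rightarrow> (nat \<Rightarrow> 'l \<Rightarrow> 'l \<Rightarrow> 'l) \<Rightarrow> ('b \<Rightarrow> 'l) \<Rightarrow> 'a \<Rightarrow> 'l" where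
  "up_op A B R \<sigma> ld g a = (INF b\<in>B. ld (\<sigma> a b) (R a b) (g b))"

definition down_op ::
  "'a set \<Rightarrow> 'b set \<Rightarrow> ('a \<Rightarrow> 'b \<Rightarrow> 'l::complete_lattice) \<Rightarrow> ('a \<Rightarrow> 'b \<Rightarrow> nat)
    \<Rightarrow> (nat \<Rightarrow> 'l \<Rightarrow> 'l \<Rightarrow> 'l) \<Rightarrow> ('a \<Rightarrow> 'l) \<Rightarrow> 'b \<Rightarrow> 'l" where
  "down_op A B R \<sigma> rd f b = (INF a\<in>A. rd (\<sigma> a b) (R a b) (f a))"

text \<open>The concept lattice: pairs (g,f) of L-fuzzy subsets g of B and f of A
  (represented as functions that are undefined outside B resp. A) with
  g-up = f and f-down = g.\<close>

definition concepts ::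
  "'a set \<Rightarrow> 'b set \<Rightarrow> ('a \<Rightarrow> 'b \<Rightarrow> 'l::complete_lattice) \<Rightarrow> ('a \<Rightarrow> 'b \<Rightarrow> nat)
    \<Rightarrow> (nat \<Rightarrow> 'l \<Rightarrow> 'l \<Rightarrow> 'l) \<Rightarrow> (nat \<Rightarrow> 'l \<Rightarrow> 'l \<Rightarrow> 'l) \<Rightarrow> (('b \<Rightarrow> 'l) \<times> ('a \<Rightarrow> 'l)) set" where
  "concepts A B R \<sigma> ld rd =
     {(g, f). (\<forall>b. b \<notin> B \<longrightarrow> g b = undefined) \<and> (\<forall>a. a \<notin> A \<longrightarrow> f a = undefined) \<and>
              (\<forall>a\<in>A. f a = up_op A B R \<sigma> ld g a) \<and>
              (\<forall>b\<in>B. g b = down_op A B R \<sigma> rd f b)}"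

definition concept_le ::
  "'b set \<Rightarrow> (('b \<Rightarrow> 'l::complete_lattice) \<times> ('a \<Rightarrow> 'l)) \<Rightarrow> (('b \<Rightarrow> 'l) \<times> ('a \<Rightarrow> 'l)) \<Rightarrow> bool" where
  "concept_le B c1 c2 \<longleftrightarrow> (\<forall>b\<in>B. fst c1 b \<le> fst c2 b)"

definition acc_condition :: "'m set \<Rightarrow> ('m \<Rightarrow> 'm \<Rightarrow> bool) \<Rightarrow> bool" where
  "acc_condition M le \<longleftrightarrow>
     (\<forall>c::nat \<Rightarrow> 'm. (\<forall>i. c i \<in> M) \<and> (\<forall>i. le (c i) (c (Suc i))) \<longrightarrow> (\<exists>N. \<forall>m\<ge>N. c m = c N))"

definition is_least :: "'m set \<Rightarrow> ('m \<Rightarrow> 'm \<Rightarrow> bool) \<Rightarrow> 'm \<Rightarrow> bool" where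
  "is_least M le x \<longleftrightarrow> x \<in> M \<and> (\<forall>y\<in>M. le x y)"

definition is_greatest :: "'m set \<Rightarrow> ('m \<Rightarrow> 'm \<Rightarrow> bool) \<Rightarrow> 'm \<Rightarrow> bool" where
  "is_greatest M le x \<longleftrightarrow> x \<in> M \<and> (\<forall>y\<in>M. le y x)"

definition inner :: "'m set \<Rightarrow> ('m \<Rightarrow> 'm \<Rightarrow> bool) \<Rightarrow> 'm set \<Rightarrow> 'm set" where
  "inner M le K = {k\<in>K. \<not> is_least M le k \<and> \<not> is_greatest M le k}"

definition is_join_in :: "'m set \<Rightarrow> ('m \<Rightarrow> 'm \<Rightarrow> bool) \<Rightarrow> 'm \<Rightarrow> 'm \<Rightarrow> 'm \<Rightarrow> bool" where
  "is_join_in M le x y s \<longleftrightarrow> s \<in> M \<and> le x s \<and> le y s \<and> (\<forall>u\<in>M. le x u \<and> le y u \<longrightarrow> le s u)"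

definition is_meet_in :: "'m set \<Rightarrow> ('m \<Rightarrow> 'm \<Rightarrow> bool) \<Rightarrow> 'm \<Rightarrow> 'm \<Rightarrow> 'm \<Rightarrow> bool" where
  "is_meet_in M le x y s \<longleftrightarrow> s \<in> M \<and> le s x \<and> le s y \<and> (\<forall>u\<in>M. le u x \<and> le u y \<longrightarrow> le u s)"

definition sublattice_of :: "'m set \<Rightarrow> ('m \<Rightarrow> 'm \<Rightarrow> bool) \<Rightarrow> 'm set \<Rightarrow> bool" where
  "sublattice_of M le K \<longleftrightarrow> K \<subseteq> M \<and> K \<noteq> {} \<and>
     (\<forall>x\<in>K. \<forall>y\<in>K. \<forall>s. is_join_in M le x y s \<longrightarrow> s \<in> K) \<and>
     (\<forall>x\<in>K. \<forall>y\<in>K. \<forall>s. is_meet_in M le x y s \<longrightarrow> s \<in> K)"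

definition is_block :: "'m set \<Rightarrow> ('m \<Rightarrow> 'm \<Rightarrow> bool) \<Rightarrow> 'm set \<Rightarrow> bool" where
  "is_block M le K \<longleftrightarrow> sublattice_of M le K \<and> K \<subset> M \<and> inner M le K \<noteq> {} \<and>
     (\<forall>k\<in>inner M le K. inner M le ({x\<in>M. le k x} \<union> {x\<in>M. le x k}) \<subseteq> K)"

definition independent_blocks :: "'m set \<Rightarrow> ('m \<Rightarrow> 'm \<Rightarrow> bool) \<Rightarrow> 'm set \<Rightarrow> 'm set \<Rightarrow> bool" where
  "independent_blocks M le K1 K2 \<longleftrightarrow> inner M le (K1 \<inter> K2) = {}"

definition has_block_decomposition :: "'m set \<Rightarrow> ('m \<Rightarrow> 'm \<Rightarrow> bool) \<Rightarrow> bool" where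
  "has_block_decomposition M le \<longleftrightarrow>
     (\<exists>\<K>. (\<forall>K\<in>\<K>. is_block M le K) \<and>
          (\<forall>K1\<in>\<K>. \<forall>K2\<in>\<K>. K1 \<noteq> K2 \<longrightarrow> independent_blocks M le K1 K2) \<and>
          \<Union>\<K> = M)"

definition separable_subcontext ::
  "'a set \<Rightarrow> 'b set \<Rightarrow> ('a \<Rightarrow> 'b \<Rightarrow> 'l::complete_lattice) \<Rightarrow> 'a set \<Rightarrow> 'b set \<Rightarrow> bool" where
  "separable_subcontext A B R Y X \<longleftrightarrow>
     Y \<subset> A \<and> X \<subset> B \<and> Y \<noteq> {} \<and> X \<noteq> {} \<and>
     (\<exists>a\<in>Y. \<exists>b\<in>X. R a b \<noteq> bot) \<and>
     (\<forall>a\<in>Y. \<forall>b\<in>B - X. R a b = bot) \<and>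
     (\<forall>a\<in>A - Y. \<forall>b\<in>X. R a b = bot)"

text \<open>A family of subcontexts is represented by the set of its pairs (A_lambda, B_lambda);
  since all A_lambda are non-empty and pairwise disjoint, the index is irrelevant.\<close>
definition has_subcontext_decomposition ::
  "'a set \<Rightarrow> 'b set \<Rightarrow> ('a \<Rightarrow> 'b \<Rightarrow> 'l::complete_lattice) \<Rightarrow> ('a \<Rightarrow> 'b \<Rightarrow> nat)
    \<Rightarrow> (nat \<Rightarrow> 'l \<Rightarrow> 'l \<Rightarrow> 'l) \<Rightarrow> bool" where
  "has_subcontext_decomposition A B R \<sigma> cj \<longleftrightarrow>
     (\<exists>\<P> :: ('a set \<times> 'b set) set. \<P> \<noteq> {} \<and>
        (\<forall>(Y, X)\<in>\<P>. separable_subcontext A B R Y X) \<and>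
        (\<forall>p\<in>\<P>. \<forall>q\<in>\<P>. p \<noteq> q \<longrightarrow> fst p \<inter> fst q = {} \<and> snd p \<inter> snd q = {}) \<and>
        (\<Union>p\<in>\<P>. fst p) = A \<and> (\<Union>p\<in>\<P>. snd p) = B \<and>
        (\<forall>(Y, X)\<in>\<P>. \<forall>(a, b) \<in> ((A - Y) \<times> X) \<union> (Y \<times> (B - X)).
            \<not> has_zero_divisors (cj (\<sigma> a b))))"

end

theory Submission
  imports Defs
begin

text \<open>A separable subcontext (Y, X) whose conjunctors across the cut have no zero divisors
  splits the concept lattice: across the cut f(a) & g(b) \<le> R(a, b) = \<bottom> forces f(a) or g(b)
  to vanish, so a concept whose extent meets X has its intent inside Y and one whose intent
  meets Y has its extent inside X. Hence the concepts with extent inside X or intent inside Y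
  form a block, and disjoint subcontexts give independent blocks. Conversely, whenever
  x & y \<le> R(a, b) with x, y \<noteq> \<bottom>, the attribute concept of a and the object concept of b are
  joined by a chain of comparable concepts different from \<bottom> and \<top>, so they lie in the same
  block; the attributes and objects whose concepts lie in one block of a decomposition thus form
  an independent subcontext.\<close>

lemma adjoint_triple_bot_left:
  assumes "adjoint_triple cj ld rd"
  shows "cj bot y = bot"
proof -
  have "bot \<le> ld bot y" by simp
  then show ?thesis using assms bot_unique unfolding adjoint_triple_def by blast
qed

lemma adjoint_triple_bot_right:
  assumes "adjoint_triple cj ld rd"
  shows "cj x bot = bot"
proof -
  have "bot \<le> rd bot x" by simp
  then show ?thesis using assms bot_unique unfolding adjoint_triple_def by blast
qed

lemma adjoint_triple_mono:
  assumes adj: "adjoint_triple cj ld rd" and "x \<le> x'" and "y \<le> y'"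
  shows "cj x y \<le> cj x' y'"
proof -
  have "y' \<le> rd (cj x y') x" and "x' \<le> ld (cj x' y') y'"
    using adj unfolding adjoint_triple_def by blast+
  then have "y \<le> rd (cj x y') x" and "x \<le> ld (cj x' y') y'"
    using \<open>x \<le> x'\<close> \<open>y \<le> y'\<close> by (blast intro: order_trans)+
  then have "cj x y \<le> cj x y'" and "cj x y' \<le> cj x' y'"
    using adj unfolding adjoint_triple_def by blast+
  then show ?thesis by (rule order_trans)
qed

lemma adjoint_triple_ld_top_le:
  assumes "adjoint_triple cj ld rd" and "\<And>x. cj x top = x"
  shows "ld z top \<le> z"
  using assms unfolding adjoint_triple_def by (metis order_refl)

lemma adjoint_triple_rd_top_le:
  assumes "adjoint_triple cj ld rd" and "\<And>x. cj top x = x"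
  shows "rd z top \<le> z"
  using assms unfolding adjoint_triple_def by (metis order_refl)

lemma inner_eq_Int_inner:
  "K \<subseteq> M \<Longrightarrow> inner M le K = K \<inter> inner M le M"
  unfolding inner_def by blast

lemma block_subset: "is_block M le K \<Longrightarrow> K \<subseteq> M"
  unfolding is_block_def sublattice_of_def by blast

lemma block_comparable_mem:
  assumes "is_block M le K" and "k \<in> K" and "k \<in> inner M le M"
    and "x \<in> inner M le M" and "le k x \<or> le x k"
  shows "x \<in> K"
proof -
  have "k \<in> inner M le K" using assms(2,3) unfolding inner_def by blast
  moreover have "x \<in> inner M le ({y\<in>M. le k y} \<union> {y\<in>M. le y k})"
    using assms(4,5) unfolding inner_def by blast
  ultimately show ?thesis using assms(1) unfolding is_block_def by blast
qed

lemma independent_blocks_Int_not_inner: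
  "independent_blocks M le K1 K2 \<Longrightarrow> k \<in> K1 \<Longrightarrow> k \<in> K2 \<Longrightarrow> k \<notin> inner M le M"
  unfolding independent_blocks_def inner_def by blast

lemma has_block_decompositionI:
  assumes "\<And>i. i \<in> I \<Longrightarrow> is_block M le (K i)"
    and "\<And>i j. i \<in> I \<Longrightarrow> j \<in> I \<Longrightarrow> i \<noteq> j \<Longrightarrow> independent_blocks M le (K i) (K j)"
    and "(\<Union>i\<in>I. K i) = M"
  shows "has_block_decomposition M le"
  unfolding has_block_decomposition_def using assms by (intro exI[of _ "K ` I"]) blast

lemma block_decomposition_other_block:
  assumes "\<forall>K\<in>\<K>. is_block M le K" and "\<Union>\<K> = M" and "K \<in> \<K>"
  obtains K' where "K' \<in> \<K>" and "K' \<noteq> K"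
proof -
  have "K \<subset> M" using assms(1,3) unfolding is_block_def by blast
  then obtain c where "c \<in> \<Union>\<K>" and "c \<notin> K" unfolding assms(2) by blast
  then show thesis using that by blast
qed

definition independent_subcontext ::
  "'a set \<Rightarrow> 'b set \<Rightarrow> ('a \<Rightarrow> 'b \<Rightarrow> 'l::complete_lattice) \<Rightarrow> ('a \<Rightarrow> 'b \<Rightarrow> nat)
    \<Rightarrow> (nat \<Rightarrow> 'l \<Rightarrow> 'l \<Rightarrow> 'l) \<Rightarrow> 'a set \<Rightarrow> 'b set \<Rightarrow> bool" where
  "independent_subcontext A B R \<sigma> cj Y X \<longleftrightarrow> separable_subcontext A B R Y X \<and>
     (\<forall>a\<in>A. \<forall>b\<in>B. (a \<in> Y) \<noteq> (b \<in> X) \<longrightarrow> \<not> has_zero_divisors (cj (\<sigma> a b)))"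

lemma independent_subcontext_iff_cross_pairs:
  "independent_subcontext A B R \<sigma> cj Y X \<longleftrightarrow> separable_subcontext A B R Y X \<and>
     (\<forall>(a, b) \<in> ((A - Y) \<times> X) \<union> (Y \<times> (B - X)). \<not> has_zero_divisors (cj (\<sigma> a b)))"
  unfolding independent_subcontext_def separable_subcontext_def by blast

lemma has_subcontext_decomposition_iff:
  "has_subcontext_decomposition A B R \<sigma> cj \<longleftrightarrow>
     (\<exists>\<P>. \<P> \<noteq> {} \<and> (\<forall>p\<in>\<P>. independent_subcontext A B R \<sigma> cj (fst p) (snd p)) \<and>
        (\<forall>p\<in>\<P>. \<forall>q\<in>\<P>. p \<noteq> q \<longrightarrow> fst p \<inter> fst q = {} \<and> snd p \<inter> snd q = {}) \<and>
        (\<Union>p\<in>\<P>. fst p) = A \<and> (\<Union>p\<in>\<P>. snd p) = B)"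
  unfolding has_subcontext_decomposition_def independent_subcontext_iff_cross_pairs
  by (simp add: split_beta ball_conj_distrib conj_ac)

section \<open>The multi-adjoint concept lattice\<close>

locale multi_adjoint_context =
  fixes cj ld rd :: "nat \<Rightarrow> 'l::complete_lattice \<Rightarrow> 'l \<Rightarrow> 'l"
    and A :: "'a set" and B :: "'b set"
    and R :: "'a \<Rightarrow> 'b \<Rightarrow> 'l" and \<sigma> :: "'a \<Rightarrow> 'b \<Rightarrow> nat"
  assumes adjoint_triple_at:
    "\<And>a b. a \<in> A \<Longrightarrow> b \<in> B \<Longrightarrow> adjoint_triple (cj (\<sigma> a b)) (ld (\<sigma> a b)) (rd (\<sigma> a b))"
begin

abbreviation \<M> :: "(('b \<Rightarrow> 'l) \<times> ('a \<Rightarrow> 'l)) set" where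
  "\<M> \<equiv> concepts A B R \<sigma> ld rd"

abbreviation concept_leq :: "('b \<Rightarrow> 'l) \<times> ('a \<Rightarrow> 'l) \<Rightarrow> ('b \<Rightarrow> 'l) \<times> ('a \<Rightarrow> 'l) \<Rightarrow> bool"
    (infix "\<preceq>" 50) where
  "c \<preceq> d \<equiv> concept_le B c d"

lemma le_ld_iff: "a \<in> A \<Longrightarrow> b \<in> B \<Longrightarrow> x \<le> ld (\<sigma> a b) z y \<longleftrightarrow> cj (\<sigma> a b) x y \<le> z"
  using adjoint_triple_at unfolding adjoint_triple_def by blast

lemma le_rd_iff: "a \<in> A \<Longrightarrow> b \<in> B \<Longrightarrow> y \<le> rd (\<sigma> a b) z x \<longleftrightarrow> cj (\<sigma> a b) x y \<le> z"
  using adjoint_triple_at unfolding adjoint_triple_def by blast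

lemma cj_bot_left [simp]: "a \<in> A \<Longrightarrow> b \<in> B \<Longrightarrow> cj (\<sigma> a b) bot y = bot"
  using adjoint_triple_at by (rule adjoint_triple_bot_left)

lemma cj_bot_right [simp]: "a \<in> A \<Longrightarrow> b \<in> B \<Longrightarrow> cj (\<sigma> a b) x bot = bot"
  using adjoint_triple_at by (rule adjoint_triple_bot_right)

lemma cj_mono: "a \<in> A \<Longrightarrow> b \<in> B \<Longrightarrow> x \<le> x' \<Longrightarrow> y \<le> y' \<Longrightarrow> cj (\<sigma> a b) x y \<le> cj (\<sigma> a b) x' y'"
  using adjoint_triple_at by (rule adjoint_triple_mono)

definition up :: "('b \<Rightarrow> 'l) \<Rightarrow> 'a \<Rightarrow> 'l" where
  "up g a = (if a \<in> A then up_op A B R \<sigma> ld g a else undefined)"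

definition down :: "('a \<Rightarrow> 'l) \<Rightarrow> 'b \<Rightarrow> 'l" where
  "down f b = (if b \<in> B then down_op A B R \<sigma> rd f b else undefined)"

definition rectangle :: "('a \<Rightarrow> 'l) \<Rightarrow> ('b \<Rightarrow> 'l) \<Rightarrow> bool" where
  "rectangle f g \<longleftrightarrow> (\<forall>a\<in>A. \<forall>b\<in>B. cj (\<sigma> a b) (f a) (g b) \<le> R a b)"

lemma le_down_iff_rectangle: "(\<forall>b\<in>B. g b \<le> down f b) \<longleftrightarrow> rectangle f g"
  unfolding down_def down_op_def rectangle_def by (auto simp: le_INF_iff le_rd_iff)

lemma le_up_iff_rectangle: "(\<forall>a\<in>A. f a \<le> up g a) \<longleftrightarrow> rectangle f g"
  unfolding up_def up_op_def rectangle_def by (auto simp: le_INF_iff le_ld_iff)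

lemma rectangle_antimono:
  assumes "rectangle f g" and "\<forall>a\<in>A. f' a \<le> f a" and "\<forall>b\<in>B. g' b \<le> g b"
  shows "rectangle f' g'"
  using assms unfolding rectangle_def by (meson cj_mono order_trans)

lemma mem_concepts_iff: "c \<in> \<M> \<longleftrightarrow> fst c = down (snd c) \<and> snd c = up (fst c)"
  by (cases c) (auto simp: concepts_def up_def down_def fun_eq_iff)

lemma concept_rectangle: "c \<in> \<M> \<Longrightarrow> rectangle (snd c) (fst c)"
  using le_up_iff_rectangle mem_concepts_iff by (metis order_refl)

lemma concept_le_iff_intent:
  assumes c: "c \<in> \<M>" and d: "d \<in> \<M>"
  shows "c \<preceq> d \<longleftrightarrow> (\<forall>a\<in>A. snd d a \<le> snd c a)"
proof
  assume "c \<preceq> d"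
  then have "rectangle (snd d) (fst c)"
    using rectangle_antimono[OF concept_rectangle[OF d]] unfolding concept_le_def by blast
  then show "\<forall>a\<in>A. snd d a \<le> snd c a"
    using le_up_iff_rectangle mem_concepts_iff c by metis
next
  assume "\<forall>a\<in>A. snd d a \<le> snd c a"
  then have "rectangle (snd d) (fst c)"
    using rectangle_antimono[OF concept_rectangle[OF c]] by blast
  then show "c \<preceq> d"
    using le_down_iff_rectangle mem_concepts_iff d unfolding concept_le_def by metis
qed

lemma le_down_up: "\<forall>b\<in>B. g b \<le> down (up g) b"
  using le_down_iff_rectangle le_up_iff_rectangle by blast

lemma le_up_down: "\<forall>a\<in>A. f a \<le> up (down f) a"
  using le_down_iff_rectangle le_up_iff_rectangle by blast

lemma up_down_up: "up (down (up g)) = up g"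
proof -
  have "rectangle (up (down (up g))) g"
    using rectangle_antimono le_up_iff_rectangle le_down_up by (metis order_refl)
  then have "\<forall>a\<in>A. up (down (up g)) a \<le> up g a"
    using le_up_iff_rectangle by blast
  with le_up_down[of "up g"] show ?thesis
    by (intro ext) (metis antisym up_def)
qed

lemma down_up_down: "down (up (down f)) = down f"
proof -
  have "rectangle f (down (up (down f)))"
    using rectangle_antimono le_down_iff_rectangle le_up_down by (metis order_refl)
  then have "\<forall>b\<in>B. down (up (down f)) b \<le> down f b"
    using le_down_iff_rectangle by blast
  with le_down_up[of "down f"] show ?thesis
    by (intro ext) (metis antisym down_def)
qed

lemma extent_closure_mem: "(down (up g), up g) \<in> \<M>"
  by (simp add: mem_concepts_iff up_down_up)

lemma intent_closure_mem: "(down f, up (down f)) \<in> \<M>"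
  by (simp add: mem_concepts_iff down_up_down)

definition attribute_concept :: "'l \<Rightarrow> 'a \<Rightarrow> ('b \<Rightarrow> 'l) \<times> ('a \<Rightarrow> 'l)" where
  "attribute_concept x a = (down ((\<lambda>_. bot)(a := x)), up (down ((\<lambda>_. bot)(a := x))))"

definition object_concept :: "'l \<Rightarrow> 'b \<Rightarrow> ('b \<Rightarrow> 'l) \<times> ('a \<Rightarrow> 'l)" where
  "object_concept y b = (down (up ((\<lambda>_. bot)(b := y))), up ((\<lambda>_. bot)(b := y)))"

lemma attribute_concept_mem: "attribute_concept x a \<in> \<M>"
  unfolding attribute_concept_def by (rule intent_closure_mem)

lemma object_concept_mem: "object_concept y b \<in> \<M>"
  unfolding object_concept_def by (rule extent_closure_mem)

lemma rectangle_fun_upd_bot: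
  assumes "a \<in> A" and "b \<in> B" and "cj (\<sigma> a b) x y \<le> R a b"
  shows "rectangle ((\<lambda>_. bot)(a := x)) ((\<lambda>_. bot)(b := y))"
  using assms unfolding rectangle_def by auto

lemma le_attribute_concept_extent:
  "a \<in> A \<Longrightarrow> b \<in> B \<Longrightarrow> cj (\<sigma> a b) x y \<le> R a b \<Longrightarrow> y \<le> fst (attribute_concept x a) b"
  using le_down_iff_rectangle rectangle_fun_upd_bot unfolding attribute_concept_def
  by (metis fst_conv fun_upd_same)

lemma le_object_concept_intent:
  "a \<in> A \<Longrightarrow> b \<in> B \<Longrightarrow> cj (\<sigma> a b) x y \<le> R a b \<Longrightarrow> x \<le> snd (object_concept y b) a"
  using le_up_iff_rectangle rectangle_fun_upd_bot unfolding object_concept_def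
  by (metis snd_conv fun_upd_same)

lemma le_attribute_concept_intent: "a \<in> A \<Longrightarrow> x \<le> snd (attribute_concept x a) a"
  using le_up_down[of "(\<lambda>_. bot)(a := x)"] unfolding attribute_concept_def
  by (metis snd_conv fun_upd_same)

lemma le_object_concept_extent: "b \<in> B \<Longrightarrow> y \<le> fst (object_concept y b) b"
  using le_down_up[of "(\<lambda>_. bot)(b := y)"] unfolding object_concept_def
  by (metis fst_conv fun_upd_same)

lemma le_attribute_concept:
  assumes "c \<in> \<M>" and "a \<in> A" and "x \<le> snd c a"
  shows "c \<preceq> attribute_concept x a"
proof -
  have "rectangle ((\<lambda>_. bot)(a := x)) (fst c)"
    using rectangle_antimono[OF concept_rectangle[OF \<open>c \<in> \<M>\<close>]] assms(3) by auto
  then show ?thesis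
    using le_down_iff_rectangle unfolding concept_le_def attribute_concept_def by simp
qed

lemma object_concept_le:
  assumes "c \<in> \<M>" and "b \<in> B" and "y \<le> fst c b"
  shows "object_concept y b \<preceq> c"
proof -
  have "rectangle (snd c) ((\<lambda>_. bot)(b := y))"
    using rectangle_antimono[OF concept_rectangle[OF \<open>c \<in> \<M>\<close>]] assms(3) by auto
  then show ?thesis
    using le_up_iff_rectangle concept_le_iff_intent[OF object_concept_mem \<open>c \<in> \<M>\<close>]
    unfolding object_concept_def by simp
qed

lemma attribute_concept_top_le:
  assumes "a \<in> A"
  shows "attribute_concept top a \<preceq> attribute_concept x a"
proof (rule le_attribute_concept[OF attribute_concept_mem \<open>a \<in> A\<close>])
  show "x \<le> snd (attribute_concept top a) a"
    using order_trans[OF top_greatest le_attribute_concept_intent[OF \<open>a \<in> A\<close>]] .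
qed

lemma object_concept_le_top:
  assumes "b \<in> B"
  shows "object_concept y b \<preceq> object_concept top b"
proof (rule object_concept_le[OF object_concept_mem \<open>b \<in> B\<close>])
  show "y \<le> fst (object_concept top b) b"
    using order_trans[OF top_greatest le_object_concept_extent[OF \<open>b \<in> B\<close>]] .
qed

lemma concept_bot_at_zero_divisor_free:
  assumes "c \<in> \<M>" and "a \<in> A" and "b \<in> B" and "R a b = bot"
    and "\<not> has_zero_divisors (cj (\<sigma> a b))"
  shows "snd c a = bot \<or> fst c b = bot"
proof -
  have "cj (\<sigma> a b) (snd c a) (fst c b) = bot"
    using concept_rectangle[OF assms(1)] assms(2-4) bot_unique unfolding rectangle_def by metis
  then show ?thesis using assms(5) unfolding has_zero_divisors_def by blast
qed

end

locale normalized_unital_context = multi_adjoint_context cj ld rd A B R \<sigma>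
  for cj ld rd :: "nat \<Rightarrow> 'l::complete_lattice \<Rightarrow> 'l \<Rightarrow> 'l"
    and A :: "'a set" and B :: "'b set"
    and R :: "'a \<Rightarrow> 'b \<Rightarrow> 'l" and \<sigma> :: "'a \<Rightarrow> 'b \<Rightarrow> nat" +
  assumes unit_right [simp]: "\<And>a b x. a \<in> A \<Longrightarrow> b \<in> B \<Longrightarrow> cj (\<sigma> a b) x top = x"
    and unit_left [simp]: "\<And>a b x. a \<in> A \<Longrightarrow> b \<in> B \<Longrightarrow> cj (\<sigma> a b) top x = x"
    and normalized: "normalized_context A B R"
    and A_nonempty: "A \<noteq> {}"
begin

lemma incident_object: "a \<in> A \<Longrightarrow> \<exists>b\<in>B. R a b \<noteq> bot"
  using normalized unfolding normalized_context_def by blast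

lemma incident_attribute: "b \<in> B \<Longrightarrow> \<exists>a\<in>A. R a b \<noteq> bot"
  using normalized unfolding normalized_context_def by blast

lemma top_ne_bot: "(top :: 'l) \<noteq> bot"
proof
  obtain a where "a \<in> A" using A_nonempty by blast
  then obtain b where "R a b \<noteq> bot" using incident_object by blast
  moreover assume "(top :: 'l) = bot"
  ultimately show False by (metis bot_unique top_greatest)
qed

lemma ld_top_le: "a \<in> A \<Longrightarrow> b \<in> B \<Longrightarrow> ld (\<sigma> a b) z top \<le> z"
  using adjoint_triple_ld_top_le adjoint_triple_at unit_right by metis

lemma rd_top_le: "a \<in> A \<Longrightarrow> b \<in> B \<Longrightarrow> rd (\<sigma> a b) z top \<le> z"
  using adjoint_triple_rd_top_le adjoint_triple_at unit_left by metis

lemma is_least_iff: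
  assumes "c \<in> \<M>"
  shows "is_least \<M> (\<preceq>) c \<longleftrightarrow> (\<forall>b\<in>B. fst c b = bot)"
proof
  assume least: "is_least \<M> (\<preceq>) c"
  show "\<forall>b\<in>B. fst c b = bot"
  proof
    fix b assume "b \<in> B"
    then obtain a where a: "a \<in> A" and "R a b = bot"
      using normalized unfolding normalized_context_def by blast
    have "c \<preceq> attribute_concept top a"
      using least attribute_concept_mem unfolding is_least_def by blast
    then have "fst c b \<le> fst (attribute_concept top a) b"
      using \<open>b \<in> B\<close> unfolding concept_le_def by blast
    also have "\<dots> = (INF a'\<in>A. rd (\<sigma> a' b) (R a' b) (((\<lambda>_. bot)(a := top)) a'))"
      using \<open>b \<in> B\<close> by (simp add: attribute_concept_def down_def down_op_def)
    also have "\<dots> \<le> rd (\<sigma> a b) (R a b) top"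
      by (rule INF_lower2[OF a]) simp
    also have "\<dots> \<le> R a b"
      using a \<open>b \<in> B\<close> by (rule rd_top_le)
    finally show "fst c b = bot" using \<open>R a b = bot\<close> by (simp add: bot_unique)
  qed
next
  assume "\<forall>b\<in>B. fst c b = bot"
  then show "is_least \<M> (\<preceq>) c"
    using assms unfolding is_least_def concept_le_def by simp
qed

lemma is_greatest_iff:
  assumes "c \<in> \<M>"
  shows "is_greatest \<M> (\<preceq>) c \<longleftrightarrow> (\<forall>a\<in>A. snd c a = bot)"
proof
  assume greatest: "is_greatest \<M> (\<preceq>) c"
  show "\<forall>a\<in>A. snd c a = bot"
  proof
    fix a assume "a \<in> A"
    then obtain b where b: "b \<in> B" and "R a b = bot"
      using normalized unfolding normalized_context_def by blast
    have "object_concept top b \<preceq> c"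
      using greatest object_concept_mem unfolding is_greatest_def by blast
    then have "snd c a \<le> snd (object_concept top b) a"
      using \<open>a \<in> A\<close> concept_le_iff_intent[OF object_concept_mem assms] by blast
    also have "\<dots> = (INF b'\<in>B. ld (\<sigma> a b') (R a b') (((\<lambda>_. bot)(b := top)) b'))"
      using \<open>a \<in> A\<close> by (simp add: object_concept_def up_def up_op_def)
    also have "\<dots> \<le> ld (\<sigma> a b) (R a b) top"
      by (rule INF_lower2[OF b]) simp
    also have "\<dots> \<le> R a b"
      using \<open>a \<in> A\<close> b by (rule ld_top_le)
    finally show "snd c a = bot" using \<open>R a b = bot\<close> by (simp add: bot_unique)
  qed
next
  assume "\<forall>a\<in>A. snd c a = bot"
  then show "is_greatest \<M> (\<preceq>) c"
    using assms concept_le_iff_intent[OF _ assms] unfolding is_greatest_def by simp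
qed

definition proper_concept :: "('b \<Rightarrow> 'l) \<times> ('a \<Rightarrow> 'l) \<Rightarrow> bool" where
  "proper_concept c \<longleftrightarrow> c \<in> \<M> \<and> (\<exists>b\<in>B. fst c b \<noteq> bot) \<and> (\<exists>a\<in>A. snd c a \<noteq> bot)"

lemma inner_concepts_iff: "c \<in> inner \<M> (\<preceq>) \<M> \<longleftrightarrow> proper_concept c"
  unfolding inner_def proper_concept_def using is_least_iff is_greatest_iff by blast

lemma proper_concept_mono:
  assumes "proper_concept c" and "c \<preceq> d" and "d \<in> \<M>" and "a \<in> A" and "snd d a \<noteq> bot"
  shows "proper_concept d"
  using assms bot_unique unfolding proper_concept_def concept_le_def by metis

lemma attribute_concept_top_intent: "a \<in> A \<Longrightarrow> snd (attribute_concept top a) a = top"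
  using le_attribute_concept_intent top_unique by metis

lemma object_concept_top_extent: "b \<in> B \<Longrightarrow> fst (object_concept top b) b = top"
  using le_object_concept_extent top_unique by metis

lemma proper_attribute_concept:
  assumes "proper_concept c" and "c \<preceq> attribute_concept x a" and "a \<in> A" and "x \<noteq> bot"
  shows "proper_concept (attribute_concept x a)"
proof (rule proper_concept_mono[OF assms(1,2) attribute_concept_mem assms(3)])
  show "snd (attribute_concept x a) a \<noteq> bot"
    using le_attribute_concept_intent[OF assms(3), of x] assms(4) by (auto simp: bot_unique)
qed

lemma incidence_le_attribute_concept_top:
  "a \<in> A \<Longrightarrow> b \<in> B \<Longrightarrow> R a b \<le> fst (attribute_concept top a) b"
  by (rule le_attribute_concept_extent) simp_all

lemma incidence_le_object_concept_top:
  "a \<in> A \<Longrightarrow> b \<in> B \<Longrightarrow> R a b \<le> snd (object_concept top b) a"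
  by (rule le_object_concept_intent) simp_all

lemma proper_attribute_concept_top: "a \<in> A \<Longrightarrow> proper_concept (attribute_concept top a)"
  using incident_object incidence_le_attribute_concept_top attribute_concept_top_intent top_ne_bot
    attribute_concept_mem bot_unique unfolding proper_concept_def by metis

lemma proper_object_concept_top: "b \<in> B \<Longrightarrow> proper_concept (object_concept top b)"
  using incident_attribute incidence_le_object_concept_top object_concept_top_extent top_ne_bot
    object_concept_mem bot_unique unfolding proper_concept_def by metis

section \<open>Blocks determine independent subcontexts\<close>

lemma block_proper_comparable_iff:
  assumes "is_block \<M> (\<preceq>) K" and "proper_concept c" and "proper_concept d"
    and "c \<preceq> d \<or> d \<preceq> c"
  shows "c \<in> K \<longleftrightarrow> d \<in> K"
  using block_comparable_mem[OF assms(1)] assms(2-4) inner_concepts_iff by blast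

lemma block_attribute_object_link:
  assumes K: "is_block \<M> (\<preceq>) K" and a: "a \<in> A" and b: "b \<in> B"
    and "x \<noteq> bot" and "y \<noteq> bot" and le_R: "cj (\<sigma> a b) x y \<le> R a b"
  shows "attribute_concept top a \<in> K \<longleftrightarrow> object_concept top b \<in> K"
proof -
  define k where "k = attribute_concept x a"
  define m where "m = object_concept y b"
  have "k \<in> \<M>" "m \<in> \<M>"
    unfolding k_def m_def by (rule attribute_concept_mem object_concept_mem)+
  have "y \<le> fst m b" "x \<le> snd m a"
    unfolding m_def using le_object_concept_extent le_object_concept_intent a b le_R by blast+
  then have m: "proper_concept m"
    using \<open>m \<in> \<M>\<close> \<open>x \<noteq> bot\<close> \<open>y \<noteq> bot\<close> a b bot_unique
    unfolding proper_concept_def by metis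
  have mk: "m \<preceq> k"
    unfolding k_def using le_attribute_concept object_concept_mem a \<open>x \<le> snd m a\<close> m_def by blast
  have k: "proper_concept k"
    using proper_attribute_concept m mk a \<open>x \<noteq> bot\<close> unfolding k_def by blast
  have "attribute_concept top a \<preceq> k"
    unfolding k_def using a by (rule attribute_concept_top_le)
  then have "attribute_concept top a \<in> K \<longleftrightarrow> k \<in> K"
    using block_proper_comparable_iff[OF K proper_attribute_concept_top[OF a] k] by blast
  also have "\<dots> \<longleftrightarrow> m \<in> K"
    using block_proper_comparable_iff[OF K k m] mk by blast
  also have "\<dots> \<longleftrightarrow> object_concept top b \<in> K"
  proof -
    have "m \<preceq> object_concept top b"
      unfolding m_def using b by (rule object_concept_le_top)
    then show ?thesis
      using block_proper_comparable_iff[OF K m proper_object_concept_top[OF b]] by blast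
  qed
  finally show ?thesis .
qed

lemma block_incidence_link:
  assumes "is_block \<M> (\<preceq>) K" and "a \<in> A" and "b \<in> B" and "R a b \<noteq> bot"
  shows "attribute_concept top a \<in> K \<longleftrightarrow> object_concept top b \<in> K"
  using block_attribute_object_link[OF assms top_ne_bot] assms(2,3) by simp

lemma block_separates:
  assumes K: "is_block \<M> (\<preceq>) K" and a: "a \<in> A" and b: "b \<in> B"
    and separated: "(attribute_concept top a \<in> K) \<noteq> (object_concept top b \<in> K)"
  shows "R a b = bot" and "\<not> has_zero_divisors (cj (\<sigma> a b))"
proof -
  show "R a b = bot"
    using block_incidence_link[OF K a b] separated by blast
  show "\<not> has_zero_divisors (cj (\<sigma> a b))"
  proof
    assume "has_zero_divisors (cj (\<sigma> a b))"
    then obtain x y where "x \<noteq> bot" "y \<noteq> bot" "cj (\<sigma> a b) x y = bot"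
      unfolding has_zero_divisors_def by blast
    with block_attribute_object_link[OF K a b, of x y] separated show False by simp
  qed
qed

lemma block_contains_attribute_concept:
  assumes K: "is_block \<M> (\<preceq>) K"
  obtains a where "a \<in> A" and "attribute_concept top a \<in> K"
proof -
  have "inner \<M> (\<preceq>) K \<noteq> {}" using K unfolding is_block_def by blast
  then obtain c where "c \<in> K" and "c \<in> inner \<M> (\<preceq>) \<M>"
    using inner_eq_Int_inner[OF block_subset[OF K]] by blast
  then have c: "proper_concept c" using inner_concepts_iff by blast
  then obtain a where a: "a \<in> A" and "snd c a \<noteq> bot"
    unfolding proper_concept_def by blast
  define k where "k = attribute_concept (snd c a) a"
  have ck: "c \<preceq> k"
    unfolding k_def using le_attribute_concept c a unfolding proper_concept_def by blast
  have k: "proper_concept k"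
    using proper_attribute_concept c ck a \<open>snd c a \<noteq> bot\<close> unfolding k_def by blast
  have "attribute_concept top a \<preceq> k"
    unfolding k_def using a by (rule attribute_concept_top_le)
  then have "attribute_concept top a \<in> K"
    using block_proper_comparable_iff[OF K proper_attribute_concept_top[OF a] k]
      block_proper_comparable_iff[OF K c k] ck \<open>c \<in> K\<close> by blast
  with a show thesis by (rule that)
qed

definition attribute_part :: "(('b \<Rightarrow> 'l) \<times> ('a \<Rightarrow> 'l)) set \<Rightarrow> 'a set" where
  "attribute_part K = {a\<in>A. attribute_concept top a \<in> K}"

definition object_part :: "(('b \<Rightarrow> 'l) \<times> ('a \<Rightarrow> 'l)) set \<Rightarrow> 'b set" where
  "object_part K = {b\<in>B. object_concept top b \<in> K}"

lemma independent_blocks_disjoint_parts: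
  assumes "independent_blocks \<M> (\<preceq>) K1 K2"
  shows "attribute_part K1 \<inter> attribute_part K2 = {}" and "object_part K1 \<inter> object_part K2 = {}"
proof -
  have shared_improper: "\<not> proper_concept c" if "c \<in> K1" "c \<in> K2" for c
    using independent_blocks_Int_not_inner[OF assms that] by (simp add: inner_concepts_iff)
  show "attribute_part K1 \<inter> attribute_part K2 = {}"
    using shared_improper proper_attribute_concept_top unfolding attribute_part_def by blast
  show "object_part K1 \<inter> object_part K2 = {}"
    using shared_improper proper_object_concept_top unfolding object_part_def by blast
qed

lemma block_parts_independent_subcontext:
  assumes K: "is_block \<M> (\<preceq>) K" and K': "is_block \<M> (\<preceq>) K'"
    and indep: "independent_blocks \<M> (\<preceq>) K K'"
  shows "independent_subcontext A B R \<sigma> cj (attribute_part K) (object_part K)"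
proof -
  obtain a where a: "a \<in> A" "attribute_concept top a \<in> K"
    using block_contains_attribute_concept[OF K] .
  obtain b where b: "b \<in> B" "R a b \<noteq> bot"
    using incident_object[OF a(1)] by blast
  have incidence: "\<exists>a\<in>attribute_part K. \<exists>b\<in>object_part K. R a b \<noteq> bot"
    using block_incidence_link[OF K a(1) b] a b unfolding attribute_part_def object_part_def by blast
  obtain a' where a': "a' \<in> A" "attribute_concept top a' \<in> K'"
    using block_contains_attribute_concept[OF K'] .
  obtain b' where b': "b' \<in> B" "R a' b' \<noteq> bot"
    using incident_object[OF a'(1)] by blast
  have "a' \<in> attribute_part K'" "b' \<in> object_part K'"
    using block_incidence_link[OF K' a'(1) b'] a' b' unfolding attribute_part_def object_part_def
    by simp_all
  then have strict: "attribute_part K \<subset> A" "object_part K \<subset> B"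
    using independent_blocks_disjoint_parts[OF indep] a'(1) b'(1)
    unfolding attribute_part_def object_part_def by blast+
  have cross: "R a b = bot \<and> \<not> has_zero_divisors (cj (\<sigma> a b))"
    if "a \<in> A" "b \<in> B" "(a \<in> attribute_part K) \<noteq> (b \<in> object_part K)" for a b
    using block_separates[OF K that(1,2)] that unfolding attribute_part_def object_part_def by auto
  show ?thesis
    unfolding independent_subcontext_def separable_subcontext_def
  proof (intro conjI ballI impI)
    show "attribute_part K \<subset> A" "object_part K \<subset> B" by (fact strict)+
    show "\<exists>a\<in>attribute_part K. \<exists>b\<in>object_part K. R a b \<noteq> bot" by (fact incidence)
    then show "attribute_part K \<noteq> {}" "object_part K \<noteq> {}" by blast+
    show "R a b = bot" if "a \<in> attribute_part K" "b \<in> B - object_part K" for a b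
      using cross[of a b] that strict by auto
    show "R a b = bot" if "a \<in> A - attribute_part K" "b \<in> object_part K" for a b
      using cross[of a b] that strict by auto
    show "\<not> has_zero_divisors (cj (\<sigma> a b))"
      if "a \<in> A" "b \<in> B" "(a \<in> attribute_part K) \<noteq> (b \<in> object_part K)" for a b
      using cross[of a b] that by auto
  qed
qed

lemma block_decomposition_imp_subcontext_decomposition:
  assumes "has_block_decomposition \<M> (\<preceq>)"
  shows "has_subcontext_decomposition A B R \<sigma> cj"
proof -
  obtain \<K> where blocks: "\<forall>K\<in>\<K>. is_block \<M> (\<preceq>) K"
    and indep: "\<forall>K1\<in>\<K>. \<forall>K2\<in>\<K>. K1 \<noteq> K2 \<longrightarrow> independent_blocks \<M> (\<preceq>) K1 K2"
    and cover: "\<Union>\<K> = \<M>"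
    using assms unfolding has_block_decomposition_def by blast
  have in_block: "\<exists>K\<in>\<K>. c \<in> K" if "c \<in> \<M>" for c
    using that unfolding cover[symmetric] by blast
  define \<P> where "\<P> = (\<lambda>K. (attribute_part K, object_part K)) ` \<K>"
  have "\<P> \<noteq> {}"
    using in_block[OF attribute_concept_mem] unfolding \<P>_def by blast
  moreover have "independent_subcontext A B R \<sigma> cj (fst p) (snd p)" if "p \<in> \<P>" for p
  proof -
    obtain K where K: "K \<in> \<K>" and p: "p = (attribute_part K, object_part K)"
      using \<open>p \<in> \<P>\<close> unfolding \<P>_def by blast
    obtain K' where K': "K' \<in> \<K>" "K' \<noteq> K"
      using block_decomposition_other_block[OF blocks cover K] .
    have "independent_blocks \<M> (\<preceq>) K K'"
      using indep K K' by blast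
    then have "independent_subcontext A B R \<sigma> cj (attribute_part K) (object_part K)"
      by (rule block_parts_independent_subcontext[OF bspec[OF blocks K] bspec[OF blocks K'(1)]])
    then show ?thesis using p by simp
  qed
  moreover have "fst p \<inter> fst q = {} \<and> snd p \<inter> snd q = {}"
    if pq: "p \<in> \<P>" "q \<in> \<P>" "p \<noteq> q" for p q
  proof -
    obtain K1 K2 where K: "K1 \<in> \<K>" "K2 \<in> \<K>" "K1 \<noteq> K2"
      and "p = (attribute_part K1, object_part K1)" "q = (attribute_part K2, object_part K2)"
      using pq unfolding \<P>_def by blast
    then show ?thesis using independent_blocks_disjoint_parts[OF indep[rule_format, OF K]] by simp
  qed
  moreover have "(\<Union>p\<in>\<P>. fst p) = A"
    using in_block[OF attribute_concept_mem] unfolding \<P>_def attribute_part_def by auto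
  moreover have "(\<Union>p\<in>\<P>. snd p) = B"
    using in_block[OF object_concept_mem] unfolding \<P>_def object_part_def by auto
  ultimately show ?thesis
    unfolding has_subcontext_decomposition_iff by (intro exI[of _ \<P>]) blast
qed

section \<open>Independent subcontexts determine blocks\<close>

definition extent_within :: "'b set \<Rightarrow> ('b \<Rightarrow> 'l) \<times> ('a \<Rightarrow> 'l) \<Rightarrow> bool" where
  "extent_within X c \<longleftrightarrow> (\<forall>b\<in>B - X. fst c b = bot)"

definition intent_within :: "'a set \<Rightarrow> ('b \<Rightarrow> 'l) \<times> ('a \<Rightarrow> 'l) \<Rightarrow> bool" where
  "intent_within Y c \<longleftrightarrow> (\<forall>a\<in>A - Y. snd c a = bot)"

definition support_block :: "'a set \<Rightarrow> 'b set \<Rightarrow> (('b \<Rightarrow> 'l) \<times> ('a \<Rightarrow> 'l)) set" where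
  "support_block Y X = {c\<in>\<M>. extent_within X c \<or> intent_within Y c}"

lemma extent_within_antimono: "extent_within X d \<Longrightarrow> c \<preceq> d \<Longrightarrow> extent_within X c"
  unfolding extent_within_def concept_le_def by (metis Diff_iff bot_unique)

lemma intent_within_mono:
  "intent_within Y c \<Longrightarrow> c \<preceq> d \<Longrightarrow> c \<in> \<M> \<Longrightarrow> d \<in> \<M> \<Longrightarrow> intent_within Y d"
  unfolding intent_within_def using concept_le_iff_intent by (metis Diff_iff bot_unique)

lemma intent_within_if_extent_meets:
  assumes indep: "independent_subcontext A B R \<sigma> cj Y X"
    and "c \<in> \<M>" and "b \<in> X" and "fst c b \<noteq> bot"
  shows "intent_within Y c"
  unfolding intent_within_def
proof
  fix a assume a: "a \<in> A - Y"
  have "b \<in> B" and "R a b = bot" and "\<not> has_zero_divisors (cj (\<sigma> a b))"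
    using indep a \<open>b \<in> X\<close> unfolding independent_subcontext_def separable_subcontext_def by blast+
  then show "snd c a = bot"
    using concept_bot_at_zero_divisor_free[OF \<open>c \<in> \<M>\<close>] a \<open>fst c b \<noteq> bot\<close> by blast
qed

lemma extent_within_if_intent_meets:
  assumes indep: "independent_subcontext A B R \<sigma> cj Y X"
    and "c \<in> \<M>" and "a \<in> Y" and "snd c a \<noteq> bot"
  shows "extent_within X c"
  unfolding extent_within_def
proof
  fix b assume b: "b \<in> B - X"
  have "a \<in> A" and "R a b = bot" and "\<not> has_zero_divisors (cj (\<sigma> a b))"
    using indep b \<open>a \<in> Y\<close> unfolding independent_subcontext_def separable_subcontext_def by blast+
  then show "fst c b = bot"
    using concept_bot_at_zero_divisor_free[OF \<open>c \<in> \<M>\<close>] b \<open>snd c a \<noteq> bot\<close> by blast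
qed

lemma support_block_intent_within:
  assumes "independent_subcontext A B R \<sigma> cj Y X" and "c \<in> support_block Y X"
    and "b \<in> B" and "fst c b \<noteq> bot"
  shows "intent_within Y c"
  using assms intent_within_if_extent_meets unfolding support_block_def extent_within_def by blast

lemma support_block_extent_within:
  assumes "independent_subcontext A B R \<sigma> cj Y X" and "c \<in> support_block Y X"
    and "a \<in> A" and "snd c a \<noteq> bot"
  shows "extent_within X c"
  using assms extent_within_if_intent_meets unfolding support_block_def intent_within_def by blast

lemma support_block_join_closed:
  assumes indep: "independent_subcontext A B R \<sigma> cj Y X"
    and x: "x \<in> support_block Y X" and y: "y \<in> support_block Y X"
    and join: "is_join_in \<M> (\<preceq>) x y s"
  shows "s \<in> support_block Y X"
proof -
  have "x \<in> \<M>" "y \<in> \<M>" using x y unfolding support_block_def by blast+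
  have "s \<in> \<M>" "x \<preceq> s" "y \<preceq> s" using join unfolding is_join_in_def by blast+
  show ?thesis
  proof (cases "\<exists>b\<in>B. fst x b \<noteq> bot \<or> fst y b \<noteq> bot")
    case True
    then have "intent_within Y x \<or> intent_within Y y"
      using support_block_intent_within[OF indep x] support_block_intent_within[OF indep y] by blast
    then have "intent_within Y s"
      using intent_within_mono \<open>x \<in> \<M>\<close> \<open>y \<in> \<M>\<close> \<open>s \<in> \<M>\<close> \<open>x \<preceq> s\<close> \<open>y \<preceq> s\<close> by blast
    then show ?thesis using \<open>s \<in> \<M>\<close> unfolding support_block_def by blast
  next
    case False
    then have "y \<preceq> x" unfolding concept_le_def by simp
    then have "s \<preceq> x" using join \<open>x \<in> \<M>\<close> unfolding is_join_in_def concept_le_def by simp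
    moreover have "extent_within X x" using False unfolding extent_within_def by blast
    ultimately show ?thesis
      using extent_within_antimono \<open>s \<in> \<M>\<close> unfolding support_block_def by blast
  qed
qed

lemma support_block_meet_closed:
  assumes indep: "independent_subcontext A B R \<sigma> cj Y X"
    and x: "x \<in> support_block Y X" and y: "y \<in> support_block Y X"
    and meet: "is_meet_in \<M> (\<preceq>) x y s"
  shows "s \<in> support_block Y X"
proof -
  have "x \<in> \<M>" "y \<in> \<M>" using x y unfolding support_block_def by blast+
  have "s \<in> \<M>" "s \<preceq> x" "s \<preceq> y" using meet unfolding is_meet_in_def by blast+
  show ?thesis
  proof (cases "\<exists>a\<in>A. snd x a \<noteq> bot \<or> snd y a \<noteq> bot")
    case True
    then have "extent_within X x \<or> extent_within X y"
      using support_block_extent_within[OF indep x] support_block_extent_within[OF indep y] by blast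
    then have "extent_within X s"
      using extent_within_antimono \<open>s \<preceq> x\<close> \<open>s \<preceq> y\<close> by blast
    then show ?thesis using \<open>s \<in> \<M>\<close> unfolding support_block_def by blast
  next
    case False
    then have "x \<preceq> y" using concept_le_iff_intent[OF \<open>x \<in> \<M>\<close> \<open>y \<in> \<M>\<close>] by simp
    then have "x \<preceq> s" using meet \<open>x \<in> \<M>\<close> unfolding is_meet_in_def concept_le_def by simp
    moreover have "intent_within Y x" using False unfolding intent_within_def by blast
    ultimately show ?thesis
      using intent_within_mono \<open>x \<in> \<M>\<close> \<open>s \<in> \<M>\<close> unfolding support_block_def by blast
  qed
qed

lemma support_block_comparable_mem:
  assumes indep: "independent_subcontext A B R \<sigma> cj Y X"
    and k: "k \<in> support_block Y X" and "proper_concept k"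
    and "d \<in> \<M>" and "k \<preceq> d \<or> d \<preceq> k"
  shows "d \<in> support_block Y X"
proof -
  obtain a b where "a \<in> A" "snd k a \<noteq> bot" "b \<in> B" "fst k b \<noteq> bot"
    using \<open>proper_concept k\<close> unfolding proper_concept_def by blast
  then have "extent_within X k" "intent_within Y k" "k \<in> \<M>"
    using support_block_extent_within[OF indep k] support_block_intent_within[OF indep k] k
    unfolding support_block_def by blast+
  then show ?thesis
    using assms(4,5) extent_within_antimono intent_within_mono unfolding support_block_def by blast
qed

lemma support_block_is_block:
  assumes indep: "independent_subcontext A B R \<sigma> cj Y X"
    and a': "a' \<in> A - Y" and b': "b' \<in> B - X" and "R a' b' \<noteq> bot"
  shows "is_block \<M> (\<preceq>) (support_block Y X)"
proof -
  have sub: "support_block Y X \<subseteq> \<M>" unfolding support_block_def by blast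
  obtain a b where "a \<in> Y" "b \<in> X" "R a b \<noteq> bot"
    using indep unfolding independent_subcontext_def separable_subcontext_def by blast
  moreover have "a \<in> A" "b \<in> B"
    using indep \<open>a \<in> Y\<close> \<open>b \<in> X\<close>
    unfolding independent_subcontext_def separable_subcontext_def by blast+
  ultimately have "fst (attribute_concept top a) b \<noteq> bot"
    using incidence_le_attribute_concept_top bot_unique by metis
  then have "attribute_concept top a \<in> support_block Y X"
    using intent_within_if_extent_meets[OF indep attribute_concept_mem \<open>b \<in> X\<close>]
      attribute_concept_mem unfolding support_block_def by blast
  then have inner: "attribute_concept top a \<in> inner \<M> (\<preceq>) (support_block Y X)"
    using inner_eq_Int_inner[OF sub] inner_concepts_iff proper_attribute_concept_top \<open>a \<in> A\<close>
    by blast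
  have "fst (attribute_concept top a') b' \<noteq> bot"
    using incidence_le_attribute_concept_top a' b' \<open>R a' b' \<noteq> bot\<close> bot_unique by (metis DiffD1)
  moreover have "snd (attribute_concept top a') a' \<noteq> bot"
    using attribute_concept_top_intent a' top_ne_bot by simp
  ultimately have "attribute_concept top a' \<notin> support_block Y X"
    using a' b' unfolding support_block_def extent_within_def intent_within_def by blast
  then have strict: "support_block Y X \<subset> \<M>"
    using sub attribute_concept_mem by blast
  have "sublattice_of \<M> (\<preceq>) (support_block Y X)"
    unfolding sublattice_of_def
    using sub inner support_block_join_closed[OF indep] support_block_meet_closed[OF indep]
    unfolding inner_def by blast
  moreover have "inner \<M> (\<preceq>) ({x\<in>\<M>. k \<preceq> x} \<union> {x\<in>\<M>. x \<preceq> k}) \<subseteq> support_block Y X"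
    if "k \<in> inner \<M> (\<preceq>) (support_block Y X)" for k
    using that support_block_comparable_mem[OF indep] inner_eq_Int_inner[OF sub] inner_concepts_iff
    unfolding inner_def by blast
  ultimately show ?thesis
    unfolding is_block_def using strict inner by blast
qed

lemma support_blocks_independent:
  assumes indep1: "independent_subcontext A B R \<sigma> cj Y1 X1"
    and indep2: "independent_subcontext A B R \<sigma> cj Y2 X2"
    and "X1 \<inter> X2 = {}"
  shows "independent_blocks \<M> (\<preceq>) (support_block Y1 X1) (support_block Y2 X2)"
  unfolding independent_blocks_def
proof (rule equals0I)
  fix c assume c: "c \<in> inner \<M> (\<preceq>) (support_block Y1 X1 \<inter> support_block Y2 X2)"
  have sub: "support_block Y1 X1 \<inter> support_block Y2 X2 \<subseteq> \<M>"
    unfolding support_block_def by blast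
  have c1: "c \<in> support_block Y1 X1" and c2: "c \<in> support_block Y2 X2"
    and "proper_concept c"
    using c inner_concepts_iff unfolding inner_eq_Int_inner[OF sub] by blast+
  then obtain a b where "a \<in> A" "snd c a \<noteq> bot" "b \<in> B" "fst c b \<noteq> bot"
    unfolding proper_concept_def by blast
  then have "extent_within X1 c" "extent_within X2 c"
    using support_block_extent_within[OF indep1 c1] support_block_extent_within[OF indep2 c2]
    by blast+
  then show False
    using \<open>b \<in> B\<close> \<open>fst c b \<noteq> bot\<close> \<open>X1 \<inter> X2 = {}\<close> unfolding extent_within_def by blast
qed

lemma concept_mem_support_block:
  assumes "independent_subcontext A B R \<sigma> cj Y X" and "c \<in> \<M>" and "b \<in> X" and "fst c b \<noteq> bot"
  shows "c \<in> support_block Y X"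
  using intent_within_if_extent_meets[OF assms] \<open>c \<in> \<M>\<close> unfolding support_block_def by blast

lemma support_blocks_cover:
  assumes "\<P> \<noteq> {}" and "\<forall>p\<in>\<P>. independent_subcontext A B R \<sigma> cj (fst p) (snd p)"
    and "(\<Union>p\<in>\<P>. snd p) = B"
  shows "(\<Union>p\<in>\<P>. support_block (fst p) (snd p)) = \<M>"
proof (intro equalityI subsetI)
  fix c assume "c \<in> \<M>"
  show "c \<in> (\<Union>p\<in>\<P>. support_block (fst p) (snd p))"
  proof (cases "\<exists>b\<in>B. fst c b \<noteq> bot")
    case True
    then obtain b where "b \<in> B" "fst c b \<noteq> bot" by blast
    moreover obtain p where "p \<in> \<P>" "b \<in> snd p"
      using \<open>b \<in> B\<close> unfolding assms(3)[symmetric] by blast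
    ultimately have "c \<in> support_block (fst p) (snd p)"
      using concept_mem_support_block[OF bspec[OF assms(2) \<open>p \<in> \<P>\<close>] \<open>c \<in> \<M>\<close>] by blast
    then show ?thesis using \<open>p \<in> \<P>\<close> by blast
  next
    case False
    then have "extent_within X c" for X unfolding extent_within_def by blast
    then have "c \<in> support_block Y X" for Y X
      using \<open>c \<in> \<M>\<close> unfolding support_block_def by blast
    then show ?thesis using \<open>\<P> \<noteq> {}\<close> by blast
  qed
qed (auto simp: support_block_def)

lemma subcontext_decomposition_imp_block_decomposition:
  assumes "has_subcontext_decomposition A B R \<sigma> cj"
  shows "has_block_decomposition \<M> (\<preceq>)"
proof -
  obtain \<P> where "\<P> \<noteq> {}"
    and indep: "\<forall>p\<in>\<P>. independent_subcontext A B R \<sigma> cj (fst p) (snd p)"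
    and disjoint: "\<forall>p\<in>\<P>. \<forall>q\<in>\<P>. p \<noteq> q \<longrightarrow> fst p \<inter> fst q = {} \<and> snd p \<inter> snd q = {}"
    and cover_A: "(\<Union>p\<in>\<P>. fst p) = A" and cover_B: "(\<Union>p\<in>\<P>. snd p) = B"
    using assms unfolding has_subcontext_decomposition_iff by blast
  show ?thesis
  proof (rule has_block_decompositionI[where I = \<P> and K = "\<lambda>p. support_block (fst p) (snd p)"])
    fix p assume p: "p \<in> \<P>"
    then have indep_p: "independent_subcontext A B R \<sigma> cj (fst p) (snd p)" using indep by blast
    then obtain a1 where "a1 \<in> A" "a1 \<notin> fst p"
      unfolding independent_subcontext_def separable_subcontext_def by blast
    then obtain q where q: "q \<in> \<P>" "a1 \<in> fst q" unfolding cover_A[symmetric] by blast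
    then have "q \<noteq> p" using \<open>a1 \<notin> fst p\<close> by blast
    have indep_q: "independent_subcontext A B R \<sigma> cj (fst q) (snd q)" using indep q by blast
    then obtain a' b' where a': "a' \<in> A" "a' \<in> fst q" and b': "b' \<in> B" "b' \<in> snd q"
      and "R a' b' \<noteq> bot"
      unfolding independent_subcontext_def separable_subcontext_def by blast
    moreover have "fst p \<inter> fst q = {}" "snd p \<inter> snd q = {}"
      using disjoint p q \<open>q \<noteq> p\<close> by blast+
    ultimately show "is_block \<M> (\<preceq>) (support_block (fst p) (snd p))"
      using support_block_is_block[OF indep_p, of a' b'] by blast
  next
    show "independent_blocks \<M> (\<preceq>) (support_block (fst p) (snd p)) (support_block (fst q) (snd q))"
      if "p \<in> \<P>" "q \<in> \<P>" "p \<noteq> q" for p q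
      using support_blocks_independent indep disjoint that by blast
  next
    show "(\<Union>p\<in>\<P>. support_block (fst p) (snd p)) = \<M>"
      using support_blocks_cover \<open>\<P> \<noteq> {}\<close> indep cover_B by blast
  qed
qed

end

theorem corollary37:
  fixes n :: nat
    and cj ld rd :: "nat \<Rightarrow> 'l::complete_lattice \<Rightarrow> 'l \<Rightarrow> 'l"
    and A :: "'a set" and B :: "'b set"
    and R :: "'a \<Rightarrow> 'b \<Rightarrow> 'l" and \<sigma> :: "'a \<Rightarrow> 'b \<Rightarrow> nat"
  assumes triples: "\<forall>i\<in>{1..n}. adjoint_triple (cj i) (ld i) (rd i)"
    and units: "\<forall>i\<in>{1..n}. \<forall>x. cj i x top = x \<and> cj i top x = x"
    and A_ne: "A \<noteq> {}" and B_ne: "B \<noteq> {}"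
    and sigma_range: "\<forall>a\<in>A. \<forall>b\<in>B. \<sigma> a b \<in> {1..n}"
    and normalized: "normalized_context A B R"
    and acc: "acc_condition (concepts A B R \<sigma> ld rd) (concept_le B)"
  shows "has_subcontext_decomposition A B R \<sigma> cj \<longleftrightarrow>
         has_block_decomposition (concepts A B R \<sigma> ld rd) (concept_le B)"
proof -
  interpret normalized_unital_context cj ld rd A B R \<sigma>
    using triples units sigma_range normalized A_ne by unfold_locales blast+
  show ?thesis
    using subcontext_decomposition_imp_block_decomposition
      block_decomposition_imp_subcontext_decomposition by blast
qed

end
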